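(* Let $B\in\mathbb{Z}^{d\times d}$ be nonsingular, let $i_1,\dots,i_d$ be any permutation of $1,\dots,d$, and for $j=1,\dots,d$ let $C^{(j)}=(B_{i_1},\dots,B_{i_j})\in\mathbb{Z}^{d\times j}$. Then $$|\det B|=|\Pi(B)\cap\mathbb{Z}^d|=\prod_{j=1}^d \mathrm{frac}_{C^{(j)}}[B_{i_j}],$$ where $\mathrm{frac}_{C^{(j)}}[B_{i_j}]$ denotes the fractionality of the coordinate of $C^{(j)}$ corresponding to the column $B_{i_j}$ (its last column).
   Context: For $M\in\mathbb{Z}^{d\times j}$ with linearly independent columns, $\Pi(M)=\{Mx:x\in[0,1)^j\}$. For every $b\in\mathbb{Z}^d$ in the real span of the columns of $M$ there is a unique $x\in\mathbb{Q}^j$ with $Mx=b$. The fractionality of a coordinate $i$ of $M$ is the maximum, over all such $b$, of the denominator $z_i\ge1$ of $x_i$ written in lowest terms $x_i=y_i/z_i$ with $\gcd(y_i,z_i)=1$. *)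

theory Defs
  imports "Jordan_Normal_Form.Determinant" "HOL-Combinatorics.Permutations"
begin

definition lattice_points_parallelepiped :: "int mat \<Rightarrow> int vec set" where
  "lattice_points_parallelepiped M =
     {b. b \<in> carrier_vec (dim_row M) \<and>
         (\<exists>x :: real vec. x \<in> carrier_vec (dim_col M) \<and>
            (\<forall>k < dim_col M. 0 \<le> x $ k \<and> x $ k < 1) \<and>
            map_mat real_of_int M *\<^sub>v x = map_vec real_of_int b)}"

definition fractionality :: "int mat \<Rightarrow> nat \<Rightarrow> int" where
  "fractionality M i =
     Max {snd (quotient_of (x $ i)) | x b.
            b \<in> carrier_vec (dim_row M) \<and> x \<in> carrier_vec (dim_col M) \<and>
            map_mat rat_of_int M *\<^sub>v x = map_vec rat_of_int b}"

end

theory Submission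
  imports Defs
begin

text \<open>Let \<open>C\<^sub>j\<close> consist of the first \<open>j\<close> columns. A lattice point of \<open>\<Pi>(C\<^sub>j)\<close> is determined by
  its coordinate vector in \<open>[0,1)\<^sup>j\<close>. Grouping these vectors by their last coordinate \<open>t\<close>, every
  nonempty fibre is a translate modulo 1 of the coordinate vectors of the lattice points of
  \<open>\<Pi>(C\<^sub>j\<^sub>-\<^sub>1)\<close>, and the values of \<open>t\<close> that occur are the elements in \<open>[0,1)\<close> of the additive
  group \<open>G\<^sub>j \<subseteq> \<rat>\<close> of last coordinates of rational solutions of \<open>C\<^sub>j x \<in> \<int>\<^sup>d\<close>. This group
  contains 1 and has bounded denominators, so it is \<open>(1/f)\<int>\<close> with \<open>f\<close> the fractionality;
  hence \<open>|\<Pi>(C\<^sub>j) \<inter> \<int>\<^sup>d| = f \<cdot> |\<Pi>(C\<^sub>j\<^sub>-\<^sub>1) \<inter> \<int>\<^sup>d|\<close>.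

  For the determinant, integer row operations turn \<open>B\<close> into an upper triangular \<open>T\<close>
  without changing \<open>|det B|\<close> or any fractionality of a prefix of columns, and for \<open>T\<close> the
  \<open>j\<close>-th fractionality is \<open>|T\<^sub>j\<^sub>j|\<close>.\<close>

section \<open>Rationals with bounded denominators\<close>

abbreviation den :: "rat \<Rightarrow> int" where
  "den q \<equiv> snd (quotient_of q)"

lemma den_pos: "den q > 0"
  by (rule quotient_of_denom_pos')

lemma den_mult_eq_num: "of_int (den q) * q = of_int (fst (quotient_of q))"
proof -
  obtain a z where qz: "quotient_of q = (a, z)" by (cases "quotient_of q")
  then show ?thesis using quotient_of_denom_pos[OF qz] quotient_of_div[OF qz] by simp
qed

lemma den_dvd_of_mult_Ints:
  assumes "of_int m * q \<in> \<int>"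
  shows "den q dvd m"
proof -
  obtain a z where qz: "quotient_of q = (a, z)" by (cases "quotient_of q")
  then have z: "z > 0" and cop: "coprime a z" and q: "q = of_int a / of_int z"
    using quotient_of_denom_pos quotient_of_coprime quotient_of_div by auto
  from assms obtain w where "of_int m * q = of_int w" by (auto elim: Ints_cases)
  then have "of_int (m * a) = (of_int (w * z) :: rat)" using z q by (simp add: field_simps)
  then have "z dvd m * a" by (metis dvd_triv_right of_int_eq_iff)
  then show ?thesis using cop qz by (simp add: coprime_commute coprime_dvd_mult_left_iff)
qed

lemma den_le_of_mult_Ints:
  assumes "of_int m * q \<in> \<int>" and "m > 0"
  shows "den q \<le> m"
  using den_dvd_of_mult_Ints[OF assms(1)] assms(2) by (simp add: zdvd_imp_le)

lemma den_inverse_of_int: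
  assumes "a \<noteq> 0"
  shows "den (1 / of_int a) = \<bar>a\<bar>"
proof (rule zdvd_antisym_nonneg)
  have "of_int \<bar>a\<bar> * (1 / of_int a :: rat) = of_int (sgn a)"
    using assms by (cases "a > 0") (auto simp: field_simps)
  then show "den (1 / of_int a) dvd \<bar>a\<bar>" by (intro den_dvd_of_mult_Ints) simp
  have "(of_int (den (1 / of_int a)) :: rat) = of_int (a * fst (quotient_of (1 / of_int a :: rat)))"
    using den_mult_eq_num[of "1 / of_int a"] assms by (simp add: field_simps)
  then show "\<bar>a\<bar> dvd den (1 / of_int a)" by (simp only: of_int_eq_iff) simp
qed (use den_pos[of "1 / of_int a"] in auto)

text \<open>A group with these properties is \<open>(1/f)\<int>\<close>, where \<open>f\<close> is its largest denominator.\<close>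

locale bounded_denominator_group =
  fixes G :: "rat set"
  assumes one_mem: "1 \<in> G"
    and add_mem: "a \<in> G \<Longrightarrow> b \<in> G \<Longrightarrow> a + b \<in> G"
    and uminus_mem: "a \<in> G \<Longrightarrow> - a \<in> G"
    and finite_den_image: "finite (den ` G)"
begin

lemma zero_mem: "0 \<in> G"
  using add_mem[OF one_mem uminus_mem[OF one_mem]] by simp

lemma of_int_mult_mem:
  assumes "q \<in> G"
  shows "of_int k * q \<in> G"
proof -
  have nat: "of_nat n * q \<in> G" for n
    by (induction n) (auto simp: zero_mem distrib_right intro!: add_mem assms)
  show ?thesis
    by (cases k rule: int_cases) (use nat uminus_mem in \<open>auto simp del: of_nat_Suc\<close>)
qed

lemma int_comb_mem:
  assumes "a \<in> G" and "b \<in> G"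
  shows "of_int u * a + of_int v * b \<in> G"
  using assms by (intro add_mem of_int_mult_mem)

lemma inverse_den_mem:
  assumes "q \<in> G"
  shows "1 / of_int (den q) \<in> G"
proof -
  obtain a z where qz: "quotient_of q = (a, z)" by (cases "quotient_of q")
  then have z: "z > 0" and cop: "coprime a z" and q: "q = of_int a / of_int z"
    using quotient_of_denom_pos quotient_of_coprime quotient_of_div by auto
  obtain u v where "u * a + v * z = gcd a z" using bezout_int by blast
  with cop have uv: "u * a + v * z = 1" by simp
  have "of_int u * q + of_int v * 1 = of_int (u * a + v * z) / (of_int z :: rat)"
    using z q by (simp add: field_simps)
  then have "of_int u * q + of_int v * 1 = 1 / of_int z" by (simp add: uv)
  then show ?thesis using int_comb_mem[OF assms one_mem, of u v] qz by simp
qed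

lemma inverse_lcm_mem:
  assumes "m > 0" "n > 0" "1 / of_int m \<in> G" "1 / of_int n \<in> G"
  shows "1 / of_int (lcm m n) \<in> G"
proof -
  obtain u v where uv: "u * m + v * n = gcd m n" using bezout_int by blast
  have gl: "gcd m n * lcm m n = m * n" using assms(1,2) by (simp add: abs_mult)
  have "gcd m n > 0" using assms by simp
  have "of_int u * (1 / of_int n) + of_int v * (1 / of_int m)
      = of_int (u * m + v * n) / (of_int (m * n) :: rat)"
    using assms by (simp add: field_simps)
  also have "\<dots> = of_int (gcd m n) / of_int (gcd m n * lcm m n)" using uv gl by simp
  also have "\<dots> = 1 / of_int (lcm m n)" unfolding of_int_mult
    by (rule nonzero_divide_mult_cancel_left) (use \<open>gcd m n > 0\<close> in simp)
  finally show ?thesis using int_comb_mem[OF assms(4,3), of u v] by simp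
qed

definition max_den :: int where
  "max_den = Max (den ` G)"

lemma den_le_max_den: "q \<in> G \<Longrightarrow> den q \<le> max_den"
  unfolding max_den_def using finite_den_image by simp

lemma max_den_pos: "max_den > 0"
  using den_le_max_den[OF zero_mem] den_pos[of 0] by linarith

lemma inverse_max_den_mem: "1 / of_int max_den \<in> G"
proof -
  have "max_den \<in> den ` G" unfolding max_den_def using finite_den_image zero_mem by (intro Max_in) auto
  then show ?thesis using inverse_den_mem by auto
qed

lemma max_den_mult_Ints:
  assumes q: "q \<in> G"
  shows "of_int max_den * q \<in> \<int>"
proof -
  let ?l = "lcm max_den (den q)"
  have l: "1 / of_int ?l \<in> G"
    using inverse_lcm_mem[OF max_den_pos den_pos inverse_max_den_mem inverse_den_mem[OF q]] .
  have "?l > 0" using max_den_pos den_pos[of q] by (simp add: lcm_pos_int)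
  then have "?l \<le> max_den" using den_le_max_den[OF l] den_inverse_of_int[of ?l] \<open>?l > 0\<close> by fastforce
  then have "?l = max_den" using max_den_pos \<open>?l > 0\<close> by (meson dual_order.antisym dvd_lcm1 zdvd_imp_le)
  then have "den q dvd max_den" by (metis dvd_lcm2)
  then obtain w where "max_den = den q * w" ..
  then have "of_int max_den * q = of_int (w * fst (quotient_of q))"
    using den_mult_eq_num[of q] by (simp add: algebra_simps)
  then show ?thesis by simp
qed

lemma unit_interval_eq: "{q \<in> G. 0 \<le> q \<and> q < 1} = (\<lambda>k. of_int k / of_int max_den) ` {0..<max_den}"
proof (rule subset_antisym; rule subsetI)
  fix q assume "q \<in> {q \<in> G. 0 \<le> q \<and> q < 1}"
  then have q: "q \<in> G" "0 \<le> q" "q < 1" by auto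
  from max_den_mult_Ints[OF q(1)] obtain k where k: "of_int max_den * q = of_int k"
    by (auto elim: Ints_cases)
  have fp: "(of_int max_den :: rat) > 0" using max_den_pos by simp
  have "q = of_int k / of_int max_den" using k fp by (simp add: field_simps)
  moreover have "(0 :: rat) \<le> of_int k" "(of_int k :: rat) < of_int max_den"
    using k q fp by (metis mult_nonneg_nonneg less_imp_le, metis mult_less_cancel_left_pos mult.right_neutral)
  ultimately show "q \<in> (\<lambda>k. of_int k / of_int max_den) ` {0..<max_den}" by force
next
  fix q :: rat assume "q \<in> (\<lambda>k. of_int k / of_int max_den) ` {0..<max_den}"
  then obtain k where k: "0 \<le> k" "k < max_den" and q: "q = of_int k / of_int max_den" by auto
  have "q \<in> G" using of_int_mult_mem[OF inverse_max_den_mem, of k] q by simp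
  moreover have "0 \<le> q" "q < 1" using k q max_den_pos by (simp_all add: divide_less_eq)
  ultimately show "q \<in> {q \<in> G. 0 \<le> q \<and> q < 1}" by simp
qed

lemma card_unit_interval: "card {q \<in> G. 0 \<le> q \<and> q < 1} = nat max_den"
proof -
  have "inj_on (\<lambda>k. of_int k / (of_int max_den :: rat)) {0..<max_den}"
    using max_den_pos by (intro inj_onI) (simp add: divide_cancel_right)
  then show ?thesis unfolding unit_interval_eq by (simp add: card_image)
qed

end

section \<open>Coefficient vectors of lattice points\<close>

definition lin_comb :: "int vec list \<Rightarrow> rat list \<Rightarrow> nat \<Rightarrow> rat" where
  "lin_comb cs xs i = (\<Sum>k<length cs. of_int (cs ! k $ i) * xs ! k)"

text \<open>For \<open>v = 0\<close> these are the coordinate vectors of the lattice points of the parallelepiped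
  spanned by \<open>cs\<close>; for \<open>v i = c\<^sub>i t\<close> they form the fibre over the last coordinate \<open>t\<close> after
  appending a column \<open>c\<close>.\<close>

definition box_coeffs :: "nat \<Rightarrow> int vec list \<Rightarrow> (nat \<Rightarrow> rat) \<Rightarrow> rat list set" where
  "box_coeffs d cs v = {xs. length xs = length cs \<and> (\<forall>x\<in>set xs. 0 \<le> x \<and> x < 1) \<and>
                            (\<forall>i<d. lin_comb cs xs i + v i \<in> \<int>)}"

lemma lin_comb_snoc:
  assumes "length xs = length cs"
  shows "lin_comb (cs @ [c]) (xs @ [t]) i = lin_comb cs xs i + of_int (c $ i) * t"
  unfolding lin_comb_def using assms by (simp add: nth_append)

lemma lin_comb_map:
  "lin_comb cs (map f [0..<length cs]) i = (\<Sum>k<length cs. of_int (cs ! k $ i) * f k)"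
  unfolding lin_comb_def by (intro sum.cong) auto

lemma lin_comb_map_frac_diff_Ints:
  "lin_comb cs (map (\<lambda>k. frac (f k)) [0..<length cs]) i
     - (\<Sum>k<length cs. of_int (cs ! k $ i) * f k) \<in> \<int>"
proof -
  have "lin_comb cs (map (\<lambda>k. frac (f k)) [0..<length cs]) i
     - (\<Sum>k<length cs. of_int (cs ! k $ i) * f k)
     = - (\<Sum>k<length cs. of_int (cs ! k $ i * \<lfloor>f k\<rfloor>))"
    unfolding lin_comb_map frac_def by (simp add: right_diff_distrib sum_subtractf sum_negf)
  then show ?thesis by (simp only: Ints_minus Ints_sum Ints_of_int)
qed

lemma map_frac_nth_eq:
  assumes "\<forall>x\<in>set xs. 0 \<le> x \<and> x < 1"
  shows "map (\<lambda>k. frac (xs ! k)) [0..<length xs] = xs"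
  using assms by (intro nth_equalityI) (simp_all add: frac_eq)

lemma of_int_floor_Ints: "x \<in> \<int> \<Longrightarrow> of_int \<lfloor>x\<rfloor> = x"
  by (auto elim: Ints_cases)

lemma frac_frac_diff: "frac (frac x - y) = frac (x - y)"
  using frac_add_simps(1)[of x "- y"] by simp

lemma box_coeffs_frac_combination:
  assumes xs: "xs \<in> box_coeffs d cs v" and ys: "ys \<in> box_coeffs d cs w"
  shows "map (\<lambda>k. frac (xs ! k + of_int a * ys ! k)) [0..<length cs]
           \<in> box_coeffs d cs (\<lambda>i. v i + of_int a * w i)"
proof -
  let ?zs = "map (\<lambda>k. frac (xs ! k + of_int a * ys ! k)) [0..<length cs]"
  let ?S = "\<lambda>i. \<Sum>k<length cs. of_int (cs ! k $ i) * (xs ! k + of_int a * ys ! k)"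
  have "lin_comb cs ?zs i + (v i + of_int a * w i) \<in> \<int>" if "i < d" for i
  proof -
    have "lin_comb cs ?zs i - ?S i \<in> \<int>" by (rule lin_comb_map_frac_diff_Ints)
    moreover have "?S i + (v i + of_int a * w i) = (lin_comb cs xs i + v i) + of_int a * (lin_comb cs ys i + w i)"
      unfolding lin_comb_def by (simp add: algebra_simps sum.distrib sum_distrib_left)
    moreover have "lin_comb cs xs i + v i \<in> \<int>" "lin_comb cs ys i + w i \<in> \<int>"
      using xs ys that unfolding box_coeffs_def by auto
    then have "(lin_comb cs xs i + v i) + of_int a * (lin_comb cs ys i + w i) \<in> \<int>"
      by (intro Ints_add[OF _ Ints_mult[OF Ints_of_int]])
    moreover have "lin_comb cs ?zs i + (v i + of_int a * w i)
        = (lin_comb cs ?zs i - ?S i) + (?S i + (v i + of_int a * w i))" by simp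
    ultimately show ?thesis by (simp only: Ints_add)
  qed
  then show ?thesis unfolding box_coeffs_def by (auto simp: frac_lt_1)
qed

text \<open>A nonempty fibre is in bijection with the unshifted one: subtract a fixed member
  and reduce modulo 1.\<close>

lemma bij_betw_box_coeffs_translate:
  assumes x0: "x0 \<in> box_coeffs d cs v"
  shows "bij_betw (\<lambda>xs. map (\<lambda>k. frac (xs ! k - x0 ! k)) [0..<length cs])
           (box_coeffs d cs v) (box_coeffs d cs (\<lambda>_. 0))"
proof (rule bij_betw_byWitness[where f' = "\<lambda>xs. map (\<lambda>k. frac (xs ! k + x0 ! k)) [0..<length cs]"])
  have box_id: "map (\<lambda>k. frac (xs ! k)) [0..<length cs] = xs" if "xs \<in> box_coeffs d cs w" for xs w
    using that map_frac_nth_eq[of xs] unfolding box_coeffs_def by simp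
  show "\<forall>a\<in>box_coeffs d cs v.
      map (\<lambda>k. frac (map (\<lambda>k. frac (a ! k - x0 ! k)) [0..<length cs] ! k + x0 ! k)) [0..<length cs] = a"
  proof
    fix a assume a: "a \<in> box_coeffs d cs v"
    have "map (\<lambda>k. frac (map (\<lambda>k. frac (a ! k - x0 ! k)) [0..<length cs] ! k + x0 ! k)) [0..<length cs]
        = map (\<lambda>k. frac (a ! k)) [0..<length cs]" by (simp cong: map_cong)
    also have "\<dots> = a" by (rule box_id[OF a])
    finally show "map (\<lambda>k. frac (map (\<lambda>k. frac (a ! k - x0 ! k)) [0..<length cs] ! k + x0 ! k)) [0..<length cs] = a" .
  qed
  show "\<forall>a\<in>box_coeffs d cs (\<lambda>_. 0).
      map (\<lambda>k. frac (map (\<lambda>k. frac (a ! k + x0 ! k)) [0..<length cs] ! k - x0 ! k)) [0..<length cs] = a"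
  proof
    fix a assume a: "a \<in> box_coeffs d cs (\<lambda>_. 0)"
    have "map (\<lambda>k. frac (map (\<lambda>k. frac (a ! k + x0 ! k)) [0..<length cs] ! k - x0 ! k)) [0..<length cs]
        = map (\<lambda>k. frac (a ! k)) [0..<length cs]" by (simp add: frac_frac_diff cong: map_cong)
    also have "\<dots> = a" by (rule box_id[OF a])
    finally show "map (\<lambda>k. frac (map (\<lambda>k. frac (a ! k + x0 ! k)) [0..<length cs] ! k - x0 ! k)) [0..<length cs] = a" .
  qed
  show "(\<lambda>xs. map (\<lambda>k. frac (xs ! k - x0 ! k)) [0..<length cs]) ` box_coeffs d cs v
      \<subseteq> box_coeffs d cs (\<lambda>_. 0)"
  proof (rule image_subsetI)
    fix xs assume "xs \<in> box_coeffs d cs v"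
    from box_coeffs_frac_combination[OF this x0, where a = "-1"]
    show "map (\<lambda>k. frac (xs ! k - x0 ! k)) [0..<length cs] \<in> box_coeffs d cs (\<lambda>_. 0)" by simp
  qed
  show "(\<lambda>xs. map (\<lambda>k. frac (xs ! k + x0 ! k)) [0..<length cs]) ` box_coeffs d cs (\<lambda>_. 0)
      \<subseteq> box_coeffs d cs v"
  proof (rule image_subsetI)
    fix xs assume "xs \<in> box_coeffs d cs (\<lambda>_. 0)"
    from box_coeffs_frac_combination[OF this x0, where a = 1]
    show "map (\<lambda>k. frac (xs ! k + x0 ! k)) [0..<length cs] \<in> box_coeffs d cs v" by simp
  qed
qed

definition last_coeffs :: "nat \<Rightarrow> int vec list \<Rightarrow> int vec \<Rightarrow> rat set" where
  "last_coeffs d cs c = {t. 0 \<le> t \<and> t < 1 \<and> box_coeffs d cs (\<lambda>i. of_int (c $ i) * t) \<noteq> {}}"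

lemma box_coeffs_snoc:
  "box_coeffs d (cs @ [c]) (\<lambda>_. 0) =
     (\<Union>t\<in>last_coeffs d cs c. (\<lambda>xs. xs @ [t]) ` box_coeffs d cs (\<lambda>i. of_int (c $ i) * t))"
proof (rule subset_antisym; rule subsetI)
  fix ys assume ys: "ys \<in> box_coeffs d (cs @ [c]) (\<lambda>_. 0)"
  then have "length ys = Suc (length cs)" unfolding box_coeffs_def by simp
  then obtain xs t where ysd: "ys = xs @ [t]" by (metis length_Suc_conv_rev)
  then have "xs \<in> box_coeffs d cs (\<lambda>i. of_int (c $ i) * t)" and "0 \<le> t" "t < 1"
    using ys unfolding box_coeffs_def by (auto simp: lin_comb_snoc)
  then show "ys \<in> (\<Union>t\<in>last_coeffs d cs c. (\<lambda>xs. xs @ [t]) ` box_coeffs d cs (\<lambda>i. of_int (c $ i) * t))"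
    unfolding ysd last_coeffs_def by blast
next
  fix ys assume "ys \<in> (\<Union>t\<in>last_coeffs d cs c. (\<lambda>xs. xs @ [t]) ` box_coeffs d cs (\<lambda>i. of_int (c $ i) * t))"
  then show "ys \<in> box_coeffs d (cs @ [c]) (\<lambda>_. 0)"
    unfolding last_coeffs_def box_coeffs_def by (auto simp: lin_comb_snoc)
qed

lemma card_box_coeffs_snoc:
  assumes "finite (box_coeffs d (cs @ [c]) (\<lambda>_. 0))" and "finite (box_coeffs d cs (\<lambda>_. 0))"
  shows "card (box_coeffs d (cs @ [c]) (\<lambda>_. 0)) = card (last_coeffs d cs c) * card (box_coeffs d cs (\<lambda>_. 0))"
proof -
  let ?F = "\<lambda>t. box_coeffs d cs (\<lambda>i. of_int (c $ i) * t)"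
  have fibre: "finite (?F t) \<and> card (?F t) = card (box_coeffs d cs (\<lambda>_. 0))"
    if t: "t \<in> last_coeffs d cs c" for t
  proof -
    obtain x0 where "x0 \<in> ?F t" using t unfolding last_coeffs_def by auto
    from bij_betw_box_coeffs_translate[OF this] assms(2) show ?thesis
      using bij_betw_finite bij_betw_same_card by blast
  qed
  have "last_coeffs d cs c \<subseteq> last ` box_coeffs d (cs @ [c]) (\<lambda>_. 0)"
  proof
    fix t assume t: "t \<in> last_coeffs d cs c"
    then obtain x0 where "x0 \<in> ?F t" unfolding last_coeffs_def by auto
    then have "x0 @ [t] \<in> box_coeffs d (cs @ [c]) (\<lambda>_. 0)" using t unfolding box_coeffs_snoc by blast
    then show "t \<in> last ` box_coeffs d (cs @ [c]) (\<lambda>_. 0)" by (metis last_snoc image_eqI)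
  qed
  then have "finite (last_coeffs d cs c)" using assms(1) finite_surj by blast
  then have "card (box_coeffs d (cs @ [c]) (\<lambda>_. 0))
      = (\<Sum>t\<in>last_coeffs d cs c. card ((\<lambda>xs. xs @ [t]) ` ?F t))"
    unfolding box_coeffs_snoc using fibre by (intro card_UN_disjoint) auto
  also have "\<dots> = (\<Sum>t\<in>last_coeffs d cs c. card (box_coeffs d cs (\<lambda>_. 0)))"
    using fibre by (intro sum.cong refl) (simp add: card_image inj_on_def)
  finally show ?thesis by simp
qed

section \<open>Counting lattice points column by column\<close>

lemma mult_mat_vec_mat_of_cols_nth:
  fixes x :: "'a :: comm_ring_1 vec"
  assumes "i < d" and "x \<in> carrier_vec (length cs)"
  shows "(map_mat of_int (mat_of_cols d cs) *\<^sub>v x) $ i = (\<Sum>l<length cs. of_int (cs ! l $ i) * x $ l)"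
proof -
  have "(map_mat of_int (mat_of_cols d cs) *\<^sub>v x) $ i = row (map_mat of_int (mat_of_cols d cs)) i \<bullet> x"
    using assms by simp
  also have "\<dots> = (\<Sum>l\<in>{0..<length cs}. of_int (cs ! l $ i) * x $ l)"
    unfolding scalar_prod_def using assms by (intro sum.cong) (auto simp: mat_of_cols_index)
  finally show ?thesis by (simp add: atLeast0LessThan)
qed

lemma mem_lattice_points_mat_of_cols_iff:
  "b \<in> lattice_points_parallelepiped (mat_of_cols d cs) \<longleftrightarrow>
    b \<in> carrier_vec d \<and> (\<exists>x :: real vec. x \<in> carrier_vec (length cs) \<and>
      (\<forall>k<length cs. 0 \<le> x $ k \<and> x $ k < 1) \<and>
      (\<forall>i<d. (\<Sum>l<length cs. of_int (cs ! l $ i) * x $ l) = of_int (b $ i)))"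
proof -
  have "(map_mat real_of_int (mat_of_cols d cs) *\<^sub>v x = map_vec real_of_int b) \<longleftrightarrow>
      (\<forall>i<d. (\<Sum>l<length cs. of_int (cs ! l $ i) * x $ l) = of_int (b $ i))"
    if "b \<in> carrier_vec d" "x \<in> carrier_vec (length cs)" for x b
    using that by (auto simp: vec_eq_iff mult_mat_vec_mat_of_cols_nth simp del: index_mult_mat_vec)
  then show ?thesis unfolding lattice_points_parallelepiped_def by auto
qed

lemma finite_bounded_int_vecs: "finite {v :: int vec. v \<in> carrier_vec d \<and> (\<forall>i<d. \<bar>v $ i\<bar> \<le> R)}"
proof (rule finite_subset)
  show "{v. v \<in> carrier_vec d \<and> (\<forall>i<d. \<bar>v $ i\<bar> \<le> R)}
      \<subseteq> vec_of_list ` {xs. set xs \<subseteq> {-R..R} \<and> length xs = d}"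
  proof
    fix v :: "int vec" assume v: "v \<in> {v. v \<in> carrier_vec d \<and> (\<forall>i<d. \<bar>v $ i\<bar> \<le> R)}"
    have "v = vec_of_list (map (\<lambda>i. v $ i) [0..<d])"
      using v by (intro eq_vecI) (auto simp: vec_of_list_index)
    moreover have "map (\<lambda>i. v $ i) [0..<d] \<in> {xs. set xs \<subseteq> {-R..R} \<and> length xs = d}"
      using v by (auto simp: abs_le_iff)
    ultimately show "v \<in> vec_of_list ` {xs. set xs \<subseteq> {-R..R} \<and> length xs = d}" by blast
  qed
qed (intro finite_imageI finite_lists_length_eq; simp)

lemma finite_lattice_points_mat_of_cols:
  "finite (lattice_points_parallelepiped (mat_of_cols d cs))"
proof (rule finite_subset)
  define R where "R = (\<Sum>l<length cs. \<Sum>i<d. \<bar>cs ! l $ i\<bar>)"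
  show "lattice_points_parallelepiped (mat_of_cols d cs)
      \<subseteq> {v :: int vec. v \<in> carrier_vec d \<and> (\<forall>i<d. \<bar>v $ i\<bar> \<le> R)}"
  proof
    fix b assume "b \<in> lattice_points_parallelepiped (mat_of_cols d cs)"
    then obtain x :: "real vec" where b: "b \<in> carrier_vec d"
      and x: "\<forall>k<length cs. 0 \<le> x $ k \<and> x $ k < 1"
      and eq: "\<forall>i<d. (\<Sum>l<length cs. of_int (cs ! l $ i) * x $ l) = of_int (b $ i)"
      unfolding mem_lattice_points_mat_of_cols_iff by blast
    have "\<bar>b $ i\<bar> \<le> R" if i: "i < d" for i
    proof -
      have "real_of_int \<bar>b $ i\<bar> = \<bar>\<Sum>l<length cs. of_int (cs ! l $ i) * x $ l\<bar>" using eq i by simp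
      also have "\<dots> \<le> (\<Sum>l<length cs. real_of_int \<bar>cs ! l $ i\<bar>)"
      proof (intro sum_abs[THEN order_trans] sum_mono)
        fix l assume "l \<in> {..<length cs}"
        then have "0 \<le> x $ l" "x $ l \<le> 1" using x by auto
        then show "\<bar>of_int (cs ! l $ i) * x $ l\<bar> \<le> real_of_int \<bar>cs ! l $ i\<bar>"
          by (simp add: abs_mult mult_left_le)
      qed
      also have "\<dots> = of_int (\<Sum>l<length cs. \<bar>cs ! l $ i\<bar>)" by simp
      also have "\<dots> \<le> of_int R" unfolding R_def of_int_le_iff
        by (intro sum_mono member_le_sum[where f = "\<lambda>i. \<bar>cs ! _ $ i\<bar>"]) (use i in auto)
      finally show ?thesis by linarith
    qed
    then show "b \<in> {v. v \<in> carrier_vec d \<and> (\<forall>i<d. \<bar>v $ i\<bar> \<le> R)}" using b by simp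
  qed
qed (rule finite_bounded_int_vecs)

lemma lattice_points_mat_of_cols_Nil: "lattice_points_parallelepiped (mat_of_cols d []) = {0\<^sub>v d}"
proof -
  have "vec 0 (\<lambda>_. 0) \<in> carrier_vec (length ([] :: int vec list))" by simp
  then show ?thesis unfolding set_eq_iff mem_lattice_points_mat_of_cols_iff
    by (auto intro!: eq_vecI exI[of _ "vec 0 (\<lambda>_. 0) :: real vec"])
qed

definition left_inverse_of_cols :: "nat \<Rightarrow> int vec list \<Rightarrow> (nat \<Rightarrow> nat \<Rightarrow> rat) \<Rightarrow> bool" where
  "left_inverse_of_cols d cs L \<longleftrightarrow> (\<forall>k<length cs. \<forall>l<length cs.
      (\<Sum>i<d. L k i * of_int (cs ! l $ i)) = (if k = l then 1 else 0))"

lemma left_inverse_of_cols_snocD: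
  assumes "left_inverse_of_cols d (cs @ [c]) L"
  shows "left_inverse_of_cols d cs L"
proof (unfold left_inverse_of_cols_def, intro allI impI)
  fix k l assume "k < length cs" "l < length cs"
  with assms[unfolded left_inverse_of_cols_def, rule_format, of k l]
  show "(\<Sum>i<d. L k i * of_int (cs ! l $ i)) = (if k = l then 1 else 0)" by (simp add: nth_append)
qed

lemma coeff_eq_left_inverse:
  fixes y :: "nat \<Rightarrow> 'a :: field_char_0"
  assumes L: "left_inverse_of_cols d cs L"
    and eq: "\<And>i. i < d \<Longrightarrow> (\<Sum>l<length cs. of_int (cs ! l $ i) * y l) = z i"
    and k: "k < length cs"
  shows "y k = (\<Sum>i<d. of_rat (L k i) * z i)"
proof -
  have "(\<Sum>i<d. of_rat (L k i) * z i) = (\<Sum>i<d. of_rat (L k i) * (\<Sum>l<length cs. of_int (cs ! l $ i) * y l))"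
    using eq by simp
  also have "\<dots> = (\<Sum>i<d. \<Sum>l<length cs. of_rat (L k i) * of_int (cs ! l $ i) * y l)"
    by (simp add: sum_distrib_left mult.assoc)
  also have "\<dots> = (\<Sum>l<length cs. of_rat (\<Sum>i<d. L k i * of_int (cs ! l $ i)) * y l)"
    by (subst sum.swap) (simp add: sum_distrib_right of_rat_sum of_rat_mult)
  also have "\<dots> = (\<Sum>l<length cs. if k = l then y l else 0)"
    using L k unfolding left_inverse_of_cols_def by (intro sum.cong) auto
  finally show ?thesis using k by simp
qed

lemma lin_comb_floor_eq:
  "xs \<in> box_coeffs d cs (\<lambda>_. 0) \<Longrightarrow> i < d \<Longrightarrow> of_int (vec d (\<lambda>i. \<lfloor>lin_comb cs xs i\<rfloor>) $ i) = lin_comb cs xs i"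
  unfolding box_coeffs_def by (simp add: of_int_floor_Ints)

lemma lattice_point_of_box_coeffs:
  assumes xs: "xs \<in> box_coeffs d cs (\<lambda>_. 0)"
  shows "vec d (\<lambda>i. \<lfloor>lin_comb cs xs i\<rfloor>) \<in> lattice_points_parallelepiped (mat_of_cols d cs)"
proof -
  define b where "b = vec d (\<lambda>i. \<lfloor>lin_comb cs xs i\<rfloor>)"
  define x :: "real vec" where "x = vec (length cs) (\<lambda>k. of_rat (xs ! k))"
  have "(\<Sum>l<length cs. of_int (cs ! l $ i) * x $ l) = of_int (b $ i)" if "i < d" for i
  proof -
    have "(\<Sum>l<length cs. of_int (cs ! l $ i) * x $ l) = of_rat (lin_comb cs xs i)"
      unfolding x_def lin_comb_def by (simp add: of_rat_sum of_rat_mult)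
    then show ?thesis using lin_comb_floor_eq[OF xs that] unfolding b_def by (metis of_rat_of_int_eq)
  qed
  moreover have "\<forall>k<length cs. 0 \<le> x $ k \<and> x $ k < 1"
    using xs unfolding x_def box_coeffs_def by (auto dest: nth_mem)
  moreover have "x \<in> carrier_vec (length cs)" "b \<in> carrier_vec d" unfolding x_def b_def by simp_all
  ultimately show ?thesis unfolding mem_lattice_points_mat_of_cols_iff b_def[symmetric] by blast
qed

lemma box_coeffs_of_lattice_point:
  assumes L: "left_inverse_of_cols d cs L" and "b \<in> lattice_points_parallelepiped (mat_of_cols d cs)"
  obtains xs where "xs \<in> box_coeffs d cs (\<lambda>_. 0)" and "b = vec d (\<lambda>i. \<lfloor>lin_comb cs xs i\<rfloor>)"
proof -
  obtain x :: "real vec" where b: "b \<in> carrier_vec d" and x: "\<forall>k<length cs. 0 \<le> x $ k \<and> x $ k < 1"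
    and eq: "\<forall>i<d. (\<Sum>l<length cs. of_int (cs ! l $ i) * x $ l) = of_int (b $ i)"
    using assms(2) unfolding mem_lattice_points_mat_of_cols_iff by blast
  define xs where "xs = map (\<lambda>k. \<Sum>i<d. L k i * of_int (b $ i)) [0..<length cs]"
  have xk: "x $ k = of_rat (xs ! k)" if "k < length cs" for k
    using coeff_eq_left_inverse[OF L _ that, of "\<lambda>l. x $ l"] eq that unfolding xs_def
    by (simp add: of_rat_sum of_rat_mult)
  have lin: "lin_comb cs xs i = of_int (b $ i)" if "i < d" for i
  proof -
    have "of_rat (lin_comb cs xs i) = (\<Sum>l<length cs. of_int (cs ! l $ i) * x $ l)"
      unfolding lin_comb_def by (simp add: of_rat_sum of_rat_mult xk)
    also have "\<dots> = of_rat (of_int (b $ i))" using eq that by simp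
    finally show ?thesis by (simp only: of_rat_eq_iff)
  qed
  have "xs \<in> box_coeffs d cs (\<lambda>_. 0)"
    unfolding box_coeffs_def
  proof (intro CollectI conjI ballI allI impI)
    fix t assume "t \<in> set xs"
    then obtain k where k: "k < length cs" and t: "t = xs ! k" unfolding xs_def in_set_conv_nth by auto
    have "0 \<le> x $ k" "x $ k < 1" using x k by auto
    then show "0 \<le> t" "t < 1" unfolding t xk[OF k] by simp_all
  qed (simp_all add: lin, simp add: xs_def)
  moreover have "b = vec d (\<lambda>i. \<lfloor>lin_comb cs xs i\<rfloor>)" using b lin by (intro eq_vecI) auto
  ultimately show thesis by (rule that)
qed

lemma bij_betw_box_coeffs_lattice_points:
  assumes L: "left_inverse_of_cols d cs L"
  shows "bij_betw (\<lambda>xs. vec d (\<lambda>i. \<lfloor>lin_comb cs xs i\<rfloor>))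
           (box_coeffs d cs (\<lambda>_. 0)) (lattice_points_parallelepiped (mat_of_cols d cs))"
proof (rule bij_betw_imageI)
  let ?f = "\<lambda>xs. vec d (\<lambda>i. \<lfloor>lin_comb cs xs i\<rfloor>)"
  have coeff: "xs ! k = (\<Sum>i<d. L k i * lin_comb cs xs i)" if "k < length cs" for xs k
    using coeff_eq_left_inverse[OF L _ that, of "(!) xs"] unfolding lin_comb_def by simp
  show "inj_on ?f (box_coeffs d cs (\<lambda>_. 0))"
  proof (rule inj_onI)
    fix xs ys assume xs: "xs \<in> box_coeffs d cs (\<lambda>_. 0)" and ys: "ys \<in> box_coeffs d cs (\<lambda>_. 0)"
      and "?f xs = ?f ys"
    then have "lin_comb cs xs i = lin_comb cs ys i" if "i < d" for i
      using lin_comb_floor_eq[OF xs that] lin_comb_floor_eq[OF ys that] by metis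
    then show "xs = ys" using xs ys unfolding box_coeffs_def
      by (intro nth_equalityI) (auto simp: coeff)
  qed
  show "?f ` box_coeffs d cs (\<lambda>_. 0) = lattice_points_parallelepiped (mat_of_cols d cs)"
    using lattice_point_of_box_coeffs box_coeffs_of_lattice_point[OF L] by blast
qed

definition last_coeff_group :: "nat \<Rightarrow> int vec list \<Rightarrow> int vec \<Rightarrow> rat set" where
  "last_coeff_group d cs c =
     {ys ! length cs | ys. length ys = Suc (length cs) \<and> (\<forall>i<d. lin_comb (cs @ [c]) ys i \<in> \<int>)}"

lemma last_coeffs_eq: "last_coeffs d cs c = {t \<in> last_coeff_group d cs c. 0 \<le> t \<and> t < 1}"
proof (rule subset_antisym; rule subsetI)
  fix t assume t: "t \<in> last_coeffs d cs c"
  then obtain x0 where x0: "x0 \<in> box_coeffs d cs (\<lambda>i. of_int (c $ i) * t)" unfolding last_coeffs_def by auto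
  then have "length x0 = length cs" unfolding box_coeffs_def by simp
  then have "t \<in> last_coeff_group d cs c" unfolding last_coeff_group_def
    using x0 unfolding box_coeffs_def by (intro CollectI exI[of _ "x0 @ [t]"]) (auto simp: lin_comb_snoc nth_append)
  then show "t \<in> {t \<in> last_coeff_group d cs c. 0 \<le> t \<and> t < 1}" using t unfolding last_coeffs_def by simp
next
  fix t assume "t \<in> {t \<in> last_coeff_group d cs c. 0 \<le> t \<and> t < 1}"
  then obtain ys where ys: "length ys = Suc (length cs)" "\<forall>i<d. lin_comb (cs @ [c]) ys i \<in> \<int>"
    and t: "t = ys ! length cs" "0 \<le> t" "t < 1" unfolding last_coeff_group_def by auto
  obtain zs t' where yd: "ys = zs @ [t']" using ys(1) by (metis length_Suc_conv_rev)
  have zl: "length zs = length cs" using ys(1) yd by simp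
  have "t' = t" using t(1) yd zl by (simp add: nth_append)
  define xs where "xs = map (\<lambda>k. frac (zs ! k)) [0..<length cs]"
  have "lin_comb cs xs i + of_int (c $ i) * t \<in> \<int>" if "i < d" for i
  proof -
    have "lin_comb cs xs i - lin_comb cs zs i \<in> \<int>"
      using lin_comb_map_frac_diff_Ints[of cs "(!) zs" i] unfolding xs_def lin_comb_def .
    moreover have "lin_comb cs zs i + of_int (c $ i) * t \<in> \<int>"
      using ys(2) that unfolding yd lin_comb_snoc[OF zl] \<open>t' = t\<close> by simp
    ultimately show ?thesis by (metis Ints_add add.assoc diff_add_cancel)
  qed
  then have "xs \<in> box_coeffs d cs (\<lambda>i. of_int (c $ i) * t)"
    unfolding box_coeffs_def xs_def by (auto simp: frac_lt_1)
  then show "t \<in> last_coeffs d cs c" using t unfolding last_coeffs_def by auto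
qed

lemma prod_den_mult_Ints:
  assumes "finite A" and "j \<in> A"
  shows "of_int (\<Prod>i\<in>A. den (h i)) * h j \<in> \<int>"
proof -
  have "of_int (\<Prod>i\<in>A. den (h i)) * h j = of_int (\<Prod>i\<in>A - {j}. den (h i)) * (of_int (den (h j)) * h j)"
    using assms by (simp add: prod.remove mult_ac)
  also have "\<dots> \<in> \<int>" unfolding den_mult_eq_num by (intro Ints_mult Ints_of_int)
  finally show ?thesis .
qed

lemma lin_comb_linear:
  "lin_comb cs (map (\<lambda>k. a * xs ! k + b * ys ! k) [0..<length cs]) i = a * lin_comb cs xs i + b * lin_comb cs ys i"
  unfolding lin_comb_map unfolding lin_comb_def by (simp add: algebra_simps sum.distrib sum_distrib_left)

lemma last_coeff_group_den_le:
  assumes L: "left_inverse_of_cols d (cs @ [c]) L" and "q \<in> last_coeff_group d cs c"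
  shows "den q \<le> (\<Prod>i<d. den (L (length cs) i))"
proof -
  let ?n = "length cs"
  define N where "N = (\<Prod>i<d. den (L ?n i))"
  obtain ys where ys: "length ys = Suc ?n" "\<forall>i<d. lin_comb (cs @ [c]) ys i \<in> \<int>" and q: "q = ys ! ?n"
    using assms(2) unfolding last_coeff_group_def by auto
  have "ys ! ?n = (\<Sum>i<d. L ?n i * lin_comb (cs @ [c]) ys i)"
    using coeff_eq_left_inverse[OF L, of "(!) ys" _ ?n] unfolding lin_comb_def by simp
  then have "of_int N * ys ! ?n = (\<Sum>i<d. (of_int N * L ?n i) * lin_comb (cs @ [c]) ys i)"
    by (simp add: sum_distrib_left mult.assoc)
  also have "\<dots> \<in> \<int>"
    unfolding N_def using ys(2) by (intro Ints_sum Ints_mult prod_den_mult_Ints) auto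
  finally show ?thesis unfolding q N_def[symmetric]
    by (rule den_le_of_mult_Ints) (simp add: N_def den_pos prod_pos)
qed

lemma bounded_denominator_group_last_coeff_group:
  assumes L: "left_inverse_of_cols d (cs @ [c]) L"
  shows "bounded_denominator_group (last_coeff_group d cs c)"
proof
  let ?n = "length cs"
  let ?G = "last_coeff_group d cs c"
  have mem_iff: "q \<in> ?G \<longleftrightarrow> (\<exists>ys. q = ys ! ?n \<and> length ys = Suc ?n \<and> (\<forall>i<d. lin_comb (cs @ [c]) ys i \<in> \<int>))"
    for q unfolding last_coeff_group_def by blast
  have comb_mem: "of_int a * p + of_int b * q \<in> ?G" if pq: "p \<in> ?G" "q \<in> ?G" for a b p q
  proof -
    obtain xs ys where xs: "p = xs ! ?n" "length xs = Suc ?n" "\<forall>i<d. lin_comb (cs @ [c]) xs i \<in> \<int>"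
      and ys: "q = ys ! ?n" "length ys = Suc ?n" "\<forall>i<d. lin_comb (cs @ [c]) ys i \<in> \<int>"
      using pq unfolding mem_iff by blast
    let ?zs = "map (\<lambda>k. of_int a * xs ! k + of_int b * ys ! k) [0..<length (cs @ [c])]"
    have "\<forall>i<d. lin_comb (cs @ [c]) ?zs i \<in> \<int>"
      unfolding lin_comb_linear using xs ys by simp
    then show ?thesis unfolding mem_iff using xs ys
      by (intro exI[of _ ?zs]) (simp del: upt_Suc)
  qed
  show one: "1 \<in> ?G" unfolding mem_iff
  proof (intro exI conjI allI impI)
    show "1 = (replicate ?n 0 @ [1 :: rat]) ! ?n" "length (replicate ?n 0 @ [1 :: rat]) = Suc ?n"
      by (simp_all add: nth_append)
    have "lin_comb cs (replicate ?n 0) i = 0" for i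
      unfolding lin_comb_def by (intro sum.neutral) simp
    then show "lin_comb (cs @ [c]) (replicate ?n 0 @ [1]) i \<in> \<int>" for i
      by (simp add: lin_comb_snoc)
  qed
  show "p + q \<in> ?G" if "p \<in> ?G" "q \<in> ?G" for p q
    using comb_mem[OF that, of 1 1] by simp
  show "- p \<in> ?G" if "p \<in> ?G" for p
    using comb_mem[OF that one, of "-1" 0] by simp
  have "den ` ?G \<subseteq> {0..(\<Prod>i<d. den (L ?n i))}"
    using last_coeff_group_den_le[OF L] by (auto simp: den_pos[THEN less_imp_le])
  then show "finite (den ` ?G)" by (rule finite_subset) simp
qed

definition denominators :: "int mat \<Rightarrow> nat \<Rightarrow> int set" where
  "denominators M i = {den (x $ i) | x b. b \<in> carrier_vec (dim_row M) \<and> x \<in> carrier_vec (dim_col M) \<and>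
                         map_mat rat_of_int M *\<^sub>v x = map_vec rat_of_int b}"

lemma fractionality_eq_Max_denominators: "fractionality M i = Max (denominators M i)"
  unfolding fractionality_def denominators_def ..

lemma denominators_mat_of_cols_snoc:
  "denominators (mat_of_cols d (cs @ [c])) (length cs) = den ` last_coeff_group d cs c"
proof (rule subset_antisym; rule subsetI)
  let ?n = "length cs"
  let ?M = "mat_of_cols d (cs @ [c])"
  fix z assume "z \<in> denominators ?M ?n"
  then obtain x b where z: "z = den (x $ ?n)" and b: "b \<in> carrier_vec d"
    and x: "x \<in> carrier_vec (Suc ?n)" and eq: "map_mat rat_of_int ?M *\<^sub>v x = map_vec rat_of_int b"
    unfolding denominators_def by auto
  have "lin_comb (cs @ [c]) (list_of_vec x) i \<in> \<int>" if i: "i < d" for i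
  proof -
    have "lin_comb (cs @ [c]) (list_of_vec x) i = (map_mat rat_of_int ?M *\<^sub>v x) $ i"
      unfolding lin_comb_def list_of_vec_index
      by (rule mult_mat_vec_mat_of_cols_nth[symmetric, OF i]) (use x in simp)
    also have "\<dots> = of_int (b $ i)" using eq b i by simp
    finally show ?thesis by simp
  qed
  moreover have "length (list_of_vec x) = Suc ?n" using x by simp
  ultimately have "list_of_vec x ! ?n \<in> last_coeff_group d cs c" unfolding last_coeff_group_def by blast
  then show "z \<in> den ` last_coeff_group d cs c" using z by (simp add: list_of_vec_index)
next
  let ?n = "length cs"
  let ?M = "mat_of_cols d (cs @ [c])"
  fix z assume "z \<in> den ` last_coeff_group d cs c"
  then obtain ys where ys: "length ys = Suc ?n" "\<forall>i<d. lin_comb (cs @ [c]) ys i \<in> \<int>"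
    and z: "z = den (ys ! ?n)" unfolding last_coeff_group_def by auto
  define x where "x = vec (Suc ?n) (\<lambda>k. ys ! k)"
  define b where "b = vec d (\<lambda>i. \<lfloor>lin_comb (cs @ [c]) ys i\<rfloor>)"
  have "map_mat rat_of_int ?M *\<^sub>v x = map_vec rat_of_int b"
  proof (rule eq_vecI)
    fix i assume "i < dim_vec (map_vec rat_of_int b)"
    then have i: "i < d" unfolding b_def by simp
    have "(map_mat rat_of_int ?M *\<^sub>v x) $ i = (\<Sum>l<length (cs @ [c]). of_int ((cs @ [c]) ! l $ i) * x $ l)"
      by (rule mult_mat_vec_mat_of_cols_nth[OF i]) (simp add: x_def)
    also have "\<dots> = lin_comb (cs @ [c]) ys i" unfolding lin_comb_def x_def by (intro sum.cong) auto
    also have "\<dots> = of_int \<lfloor>lin_comb (cs @ [c]) ys i\<rfloor>" using ys(2) i by (simp add: of_int_floor_Ints)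
    finally show "(map_mat rat_of_int ?M *\<^sub>v x) $ i = map_vec rat_of_int b $ i"
      using i unfolding b_def by simp
  qed (simp add: b_def)
  moreover have "z = den (x $ ?n)" using z unfolding x_def by simp
  ultimately show "z \<in> denominators ?M ?n" unfolding denominators_def
    by (intro CollectI exI[of _ x] exI[of _ b] conjI) (simp_all add: x_def b_def)
qed

lemma card_lattice_points_mat_of_cols_snoc:
  assumes L: "left_inverse_of_cols d (cs @ [c]) L"
  shows "int (card (lattice_points_parallelepiped (mat_of_cols d (cs @ [c])))) =
    fractionality (mat_of_cols d (cs @ [c])) (length cs) *
    int (card (lattice_points_parallelepiped (mat_of_cols d cs)))"
proof -
  interpret G: bounded_denominator_group "last_coeff_group d cs c"
    by (rule bounded_denominator_group_last_coeff_group[OF L])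
  note bij_snoc = bij_betw_box_coeffs_lattice_points[OF L]
    and bij = bij_betw_box_coeffs_lattice_points[OF left_inverse_of_cols_snocD[OF L]]
  have "finite (box_coeffs d (cs @ [c]) (\<lambda>_. 0))" "finite (box_coeffs d cs (\<lambda>_. 0))"
    using bij_betw_finite[OF bij_snoc] bij_betw_finite[OF bij] finite_lattice_points_mat_of_cols by auto
  from card_box_coeffs_snoc[OF this]
  have "card (lattice_points_parallelepiped (mat_of_cols d (cs @ [c])))
      = card (last_coeffs d cs c) * card (lattice_points_parallelepiped (mat_of_cols d cs))"
    unfolding bij_betw_same_card[OF bij_snoc] bij_betw_same_card[OF bij] .
  also have "card (last_coeffs d cs c) = nat G.max_den"
    unfolding last_coeffs_eq by (rule G.card_unit_interval)
  finally show ?thesis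
    using G.max_den_pos
    unfolding fractionality_eq_Max_denominators denominators_mat_of_cols_snoc G.max_den_def by simp
qed

lemma card_lattice_points_eq_prod_fractionality:
  assumes "left_inverse_of_cols d cs L"
  shows "int (card (lattice_points_parallelepiped (mat_of_cols d cs))) =
    (\<Prod>j = 1..length cs. fractionality (mat_of_cols d (take j cs)) (j - 1))"
  using assms
proof (induction cs rule: rev_induct)
  case Nil
  then show ?case by (simp add: lattice_points_mat_of_cols_Nil)
next
  case (snoc c cs)
  have "(\<Prod>j = 1..length (cs @ [c]). fractionality (mat_of_cols d (take j (cs @ [c]))) (j - 1))
      = fractionality (mat_of_cols d (cs @ [c])) (length cs) *
        (\<Prod>j = 1..length cs. fractionality (mat_of_cols d (take j (cs @ [c]))) (j - 1))"
    by (simp add: prod.nat_ivl_Suc')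
  also have "(\<Prod>j = 1..length cs. fractionality (mat_of_cols d (take j (cs @ [c]))) (j - 1))
      = (\<Prod>j = 1..length cs. fractionality (mat_of_cols d (take j cs)) (j - 1))"
    by (intro prod.cong) auto
  finally show ?case
    using card_lattice_points_mat_of_cols_snoc[OF snoc.prems] snoc.IH[OF left_inverse_of_cols_snocD[OF snoc.prems]]
    by simp
qed

lemma lattice_points_permute_cols_subset:
  assumes p: "p permutes {..<length cs}"
  shows "lattice_points_parallelepiped (mat_of_cols d cs)
      \<subseteq> lattice_points_parallelepiped (mat_of_cols d (permute_list p cs))"
proof
  fix b assume "b \<in> lattice_points_parallelepiped (mat_of_cols d cs)"
  then obtain x :: "real vec" where b: "b \<in> carrier_vec d" and x: "\<forall>k<length cs. 0 \<le> x $ k \<and> x $ k < 1"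
    and eq: "\<forall>i<d. (\<Sum>l<length cs. of_int (cs ! l $ i) * x $ l) = of_int (b $ i)"
    unfolding mem_lattice_points_mat_of_cols_iff by blast
  define y where "y = vec (length cs) (\<lambda>l. x $ p l)"
  have p_lt: "p l < length cs" if "l < length cs" for l
    using permutes_in_image[OF p] that by simp
  have "(\<Sum>l<length cs. of_int (permute_list p cs ! l $ i) * y $ l) = of_int (b $ i)" if "i < d" for i
  proof -
    have "(\<Sum>l<length cs. of_int (permute_list p cs ! l $ i) * y $ l)
        = (\<Sum>l<length cs. of_int (cs ! p l $ i) * x $ p l)"
      unfolding y_def by (intro sum.cong) (simp_all add: permute_list_nth[OF p])
    also have "\<dots> = (\<Sum>l<length cs. of_int (cs ! l $ i) * x $ l)"
      using sum.permute[OF p, of "\<lambda>l. of_int (cs ! l $ i) * x $ l"] by simp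
    finally show ?thesis using eq that by simp
  qed
  moreover have "\<forall>k<length cs. 0 \<le> y $ k \<and> y $ k < 1" using x p_lt unfolding y_def by simp
  moreover have "y \<in> carrier_vec (length cs)" unfolding y_def by simp
  ultimately show "b \<in> lattice_points_parallelepiped (mat_of_cols d (permute_list p cs))"
    unfolding mem_lattice_points_mat_of_cols_iff using b by auto
qed

lemma lattice_points_permute_cols:
  assumes p: "p permutes {..<length cs}"
  shows "lattice_points_parallelepiped (mat_of_cols d (permute_list p cs))
       = lattice_points_parallelepiped (mat_of_cols d cs)"
proof
  have "permute_list (Hilbert_Choice.inv p) (permute_list p cs) = cs"
    by (metis p permute_list_compose permute_list_id permutes_inv permutes_inv_o(1))
  then show "lattice_points_parallelepiped (mat_of_cols d (permute_list p cs))
      \<subseteq> lattice_points_parallelepiped (mat_of_cols d cs)"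
    using lattice_points_permute_cols_subset[of "Hilbert_Choice.inv p" "permute_list p cs" d]
    by (simp add: permutes_inv[OF p])
qed (rule lattice_points_permute_cols_subset[OF p])

section \<open>Integer row reduction\<close>

lemma field_mat_inverse:
  fixes A :: "'a :: field mat"
  assumes "A \<in> carrier_mat n n" and "det A \<noteq> 0"
  obtains A' where "A' \<in> carrier_mat n n" "A' * A = 1\<^sub>m n" "A * A' = 1\<^sub>m n"
  using det_non_zero_imp_unit[OF assms, of "()"] that by (auto simp: Units_def ring_mat_def)

definition int_row_equiv :: "nat \<Rightarrow> int mat \<Rightarrow> int mat \<Rightarrow> bool" where
  "int_row_equiv d A A' \<longleftrightarrow>
     (\<exists>U V. U \<in> carrier_mat d d \<and> V \<in> carrier_mat d d \<and> V * U = 1\<^sub>m d \<and> A' = U * A)"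

lemma int_row_equiv_refl: "A \<in> carrier_mat d n \<Longrightarrow> int_row_equiv d A A"
  unfolding int_row_equiv_def by (intro exI[of _ "1\<^sub>m d"]) simp

lemma int_row_equiv_trans:
  assumes A: "A \<in> carrier_mat d n" and "int_row_equiv d A B" and "int_row_equiv d B C"
  shows "int_row_equiv d A C"
proof -
  obtain U V U' V' where U: "U \<in> carrier_mat d d" "V \<in> carrier_mat d d" "V * U = 1\<^sub>m d" "B = U * A"
    and U': "U' \<in> carrier_mat d d" "V' \<in> carrier_mat d d" "V' * U' = 1\<^sub>m d" "C = U' * B"
    using assms(2,3) unfolding int_row_equiv_def by blast
  have "(V * V') * (U' * U) = V * (V' * (U' * U))" using U U' by (intro assoc_mult_mat) auto
  also have "V' * (U' * U) = (V' * U') * U" using U U' by (intro assoc_mult_mat[symmetric]) auto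
  finally have "(V * V') * (U' * U) = 1\<^sub>m d" using U U' by simp
  moreover have "C = (U' * U) * A" using U U' A by (simp add: assoc_mult_mat[of _ d d _ d _ n])
  ultimately show ?thesis unfolding int_row_equiv_def using U U'
    by (intro exI[of _ "U' * U"] exI[of _ "V * V'"]) auto
qed

lemma int_row_equiv_carrier: "A \<in> carrier_mat d n \<Longrightarrow> int_row_equiv d A B \<Longrightarrow> B \<in> carrier_mat d n"
  unfolding int_row_equiv_def by auto

lemma int_row_equiv_addrow:
  assumes "A \<in> carrier_mat d n" and "k < d" "l < d" "k \<noteq> l"
  shows "int_row_equiv d A (addrow a k l A)"
  unfolding int_row_equiv_def using assms addrow_mat_inv[of k d l "- a"]
  by (intro exI[of _ "addrow_mat d a k l"] exI[of _ "addrow_mat d (- a) k l"]) (auto simp: addrow_mat)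

lemma int_row_equiv_swaprows:
  assumes "A \<in> carrier_mat d n" and "k < d" "l < d"
  shows "int_row_equiv d A (swaprows k l A)"
  unfolding int_row_equiv_def using assms swaprows_mat_inv[of k d l]
  by (intro exI[of _ "swaprows_mat d k l"] exI[of _ "swaprows_mat d k l"]) (auto simp: swaprows_mat)

lemma abs_det_int_row_equiv:
  assumes "B \<in> carrier_mat d d" and "int_row_equiv d B T"
  shows "\<bar>det T\<bar> = \<bar>det B\<bar>"
proof -
  obtain U V where U: "U \<in> carrier_mat d d" "V \<in> carrier_mat d d" "V * U = 1\<^sub>m d" "T = U * B"
    using assms(2) unfolding int_row_equiv_def by blast
  have "det U * det V = 1" using det_mult[OF U(2,1)] U(3) by (simp add: mult.commute)
  then have "\<bar>det U\<bar> = 1" using abs_zmult_eq_1[of "det U" "det V"] by simp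
  moreover have "det T = det U * det B" unfolding U(4) by (rule det_mult[OF U(1) assms(1)])
  ultimately show ?thesis by (simp add: abs_mult)
qed

lemma int_row_equiv_take_cols:
  assumes B: "B \<in> carrier_mat d n" and BT: "int_row_equiv d B T" and "j \<le> n"
  shows "int_row_equiv d (mat_of_cols d (take j (cols B))) (mat_of_cols d (take j (cols T)))"
proof -
  obtain U V where U: "U \<in> carrier_mat d d" "V \<in> carrier_mat d d" "V * U = 1\<^sub>m d" "T = U * B"
    using BT unfolding int_row_equiv_def by blast
  have "mat_of_cols d (take j (cols T)) = U * mat_of_cols d (take j (cols B))"
  proof (rule eq_matI)
    fix i k assume "i < dim_row (U * mat_of_cols d (take j (cols B)))"
      "k < dim_col (U * mat_of_cols d (take j (cols B)))"
    then have "i < d" "k < j" "k < n" using U B \<open>j \<le> n\<close> by auto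
    then show "mat_of_cols d (take j (cols T)) $$ (i, k) = (U * mat_of_cols d (take j (cols B))) $$ (i, k)"
      using U B by (simp add: mat_of_cols_index cols_def)
  qed (use U B \<open>j \<le> n\<close> in auto)
  then show ?thesis unfolding int_row_equiv_def using U by blast
qed

definition upper_triangular_upto :: "nat \<Rightarrow> 'a :: zero mat \<Rightarrow> bool" where
  "upper_triangular_upto k A \<longleftrightarrow> (\<forall>i<dim_row A. \<forall>j<k. j < i \<longrightarrow> A $$ (i, j) = 0)"

lemma abs_sgn_mult_add_less:
  fixes x y :: int
  assumes "x \<noteq> 0" "y \<noteq> 0" "\<bar>y\<bar> \<le> \<bar>x\<bar>"
  shows "\<bar>- (sgn x * sgn y) * y + x\<bar> < \<bar>x\<bar>"
  using assms by (cases "x > 0"; cases "y > 0") (auto simp: sgn_if)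

text \<open>One Euclidean step on column \<open>k\<close>: subtracting the row with the smaller entry from
  the other one strictly decreases the sum of the absolute values of the entries in rows \<open>\<ge> k\<close>.\<close>

lemma addrow_decreases_column:
  fixes A :: "int mat"
  assumes A: "A \<in> carrier_mat d d" and r: "r \<in> {k..<d}" and s: "s \<in> {k..<d}" and "r \<noteq> s"
    and nz: "A $$ (s, k) \<noteq> 0" and le: "\<bar>A $$ (s, k)\<bar> \<le> \<bar>A $$ (r, k)\<bar>"
    and ut: "upper_triangular_upto k A"
  defines "A' \<equiv> addrow (- (sgn (A $$ (r, k)) * sgn (A $$ (s, k)))) r s A"
  shows "upper_triangular_upto k A'"
    and "(\<Sum>i\<in>{k..<d}. nat \<bar>A' $$ (i, k)\<bar>) < (\<Sum>i\<in>{k..<d}. nat \<bar>A $$ (i, k)\<bar>)"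
proof -
  have entry: "A' $$ (i, j) = (if r = i then - (sgn (A $$ (r, k)) * sgn (A $$ (s, k))) * A $$ (s, j) + A $$ (i, j)
      else A $$ (i, j))" if "i < d" "j < d" for i j
    unfolding A'_def using that A by simp
  have nzr: "A $$ (r, k) \<noteq> 0" using nz le by auto
  show "upper_triangular_upto k A'"
    using ut r s entry A unfolding upper_triangular_upto_def A'_def by auto
  show "(\<Sum>i\<in>{k..<d}. nat \<bar>A' $$ (i, k)\<bar>) < (\<Sum>i\<in>{k..<d}. nat \<bar>A $$ (i, k)\<bar>)"
  proof (rule sum_strict_mono_ex1)
    have "k < d" using r by simp
    then show "\<forall>i\<in>{k..<d}. nat \<bar>A' $$ (i, k)\<bar> \<le> nat \<bar>A $$ (i, k)\<bar>"
      using entry abs_sgn_mult_add_less[OF nzr nz le] by (auto intro: nat_mono)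
    show "\<exists>i\<in>{k..<d}. nat \<bar>A' $$ (i, k)\<bar> < nat \<bar>A $$ (i, k)\<bar>"
      using entry \<open>k < d\<close> r abs_sgn_mult_add_less[OF nzr nz le] by (intro bexI[of _ r]) auto
  qed simp
qed

lemma column_entries_cases:
  fixes f :: "nat \<Rightarrow> int"
  obtains (cleared) "\<forall>i. k < i \<and> i < d \<longrightarrow> f i = 0"
    | (pair) r s where "r \<in> {k..<d}" "s \<in> {k..<d}" "r \<noteq> s" "f s \<noteq> 0" "\<bar>f s\<bar> \<le> \<bar>f r\<bar>"
    | (single) i0 where "k < i0" "i0 < d" "\<forall>i\<in>{k..<d}. i \<noteq> i0 \<longrightarrow> f i = 0"
proof (cases "\<forall>i. k < i \<and> i < d \<longrightarrow> f i = 0")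
  case False
  then obtain i0 where i0: "k < i0" "i0 < d" "f i0 \<noteq> 0" by auto
  show thesis
  proof (cases "\<exists>i\<in>{k..<d}. i \<noteq> i0 \<and> f i \<noteq> 0")
    case True
    then obtain i where i: "i \<in> {k..<d}" "i \<noteq> i0" "f i \<noteq> 0" by blast
    show thesis
    proof (cases "\<bar>f i\<bar> \<le> \<bar>f i0\<bar>")
      case True
      then show thesis using pair[of i0 i] i i0 by auto
    next
      case False
      then show thesis using pair[of i i0] i i0 by auto
    qed
  qed (use single i0 in blast)
qed (use cleared in blast)

lemma int_row_equiv_clear_column:
  assumes "A \<in> carrier_mat d d" and "k < d" and "upper_triangular_upto k A"
  shows "\<exists>A'. int_row_equiv d A A' \<and> upper_triangular_upto (Suc k) A'"
  using assms
proof (induction "\<Sum>i\<in>{k..<d}. nat \<bar>A $$ (i, k)\<bar>" arbitrary: A rule: less_induct)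
  case less
  note A = less.prems(1) and ut = less.prems(3)
  consider (cleared) "\<forall>i. k < i \<and> i < d \<longrightarrow> A $$ (i, k) = 0"
    | (pair) r s where "r \<in> {k..<d}" "s \<in> {k..<d}" "r \<noteq> s" "A $$ (s, k) \<noteq> 0"
        "\<bar>A $$ (s, k)\<bar> \<le> \<bar>A $$ (r, k)\<bar>"
    | (single) i0 where "k < i0" "i0 < d" "\<forall>i\<in>{k..<d}. i \<noteq> i0 \<longrightarrow> A $$ (i, k) = 0"
    by (rule column_entries_cases[of k d "\<lambda>i. A $$ (i, k)"])
  then show ?case
  proof cases
    case cleared
    then have "upper_triangular_upto (Suc k) A"
      using ut A unfolding upper_triangular_upto_def by (metis less_Suc_eq carrier_matD(1))
    then show ?thesis using int_row_equiv_refl[OF A] by blast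
  next
    case (pair r s)
    define A2 where "A2 = addrow (- (sgn (A $$ (r, k)) * sgn (A $$ (s, k)))) r s A"
    have A2: "A2 \<in> carrier_mat d d" "int_row_equiv d A A2"
      using A pair int_row_equiv_addrow unfolding A2_def by auto
    from addrow_decreases_column[OF A pair ut] less.hyps[OF _ A2(1) less.prems(2)]
    obtain A' where "int_row_equiv d A2 A'" "upper_triangular_upto (Suc k) A'"
      unfolding A2_def by blast
    then show ?thesis using int_row_equiv_trans[OF A A2(2)] by blast
  next
    case (single i0)
    have "upper_triangular_upto (Suc k) (swaprows k i0 A)"
      using ut single A \<open>k < d\<close> unfolding upper_triangular_upto_def by (auto simp: less_Suc_eq)
    then show ?thesis using int_row_equiv_swaprows[OF A \<open>k < d\<close> single(2)] by blast
  qed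
qed

lemma int_row_equiv_upper_triangular:
  assumes B: "B \<in> carrier_mat d d"
  obtains T where "int_row_equiv d B T" "upper_triangular T"
proof -
  have "\<exists>T. int_row_equiv d B T \<and> upper_triangular_upto k T" if "k \<le> d" for k
    using that
  proof (induction k)
    case 0
    then show ?case using int_row_equiv_refl[OF B] unfolding upper_triangular_upto_def by blast
  next
    case (Suc k)
    then obtain T where T: "int_row_equiv d B T" "upper_triangular_upto k T" by auto
    have "T \<in> carrier_mat d d" using int_row_equiv_carrier[OF B T(1)] .
    from int_row_equiv_clear_column[OF this _ T(2)] Suc.prems
    obtain T' where "int_row_equiv d T T'" "upper_triangular_upto (Suc k) T'" by auto
    then show ?case using int_row_equiv_trans[OF B T(1)] by blast
  qed
  then obtain T where "int_row_equiv d B T" "upper_triangular_upto d T" by blast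
  moreover have "T \<in> carrier_mat d d" using int_row_equiv_carrier[OF B calculation(1)] .
  ultimately show thesis using that unfolding upper_triangular_upto_def upper_triangular_def
    by (metis carrier_matD(1) less_trans)
qed

lemma denominators_mult_left_subset:
  assumes U: "U \<in> carrier_mat d d" and C: "C \<in> carrier_mat d j"
  shows "denominators C i \<subseteq> denominators (U * C) i"
proof
  fix z assume "z \<in> denominators C i"
  then obtain x b where z: "z = den (x $ i)" and b: "b \<in> carrier_vec d" and x: "x \<in> carrier_vec j"
    and eq: "map_mat rat_of_int C *\<^sub>v x = map_vec rat_of_int b"
    using C unfolding denominators_def by auto
  have "map_mat rat_of_int (U * C) *\<^sub>v x = map_mat rat_of_int U *\<^sub>v (map_mat rat_of_int C *\<^sub>v x)"
    using U C x by (simp add: of_int_hom.mat_hom_mult assoc_mult_mat_vec)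
  also have "\<dots> = map_vec rat_of_int (U *\<^sub>v b)"
    unfolding eq by (rule of_int_hom.mult_mat_vec_hom[OF U b, symmetric])
  finally show "z \<in> denominators (U * C) i"
    unfolding denominators_def using z x b U C
    by (intro CollectI exI[of _ x] exI[of _ "U *\<^sub>v b"]) auto
qed

lemma fractionality_int_row_equiv:
  assumes C: "C \<in> carrier_mat d j" and "int_row_equiv d C C'"
  shows "fractionality C' i = fractionality C i"
proof -
  obtain U V where U: "U \<in> carrier_mat d d" "V \<in> carrier_mat d d" "V * U = 1\<^sub>m d" "C' = U * C"
    using assms(2) unfolding int_row_equiv_def by blast
  have "V * C' = (V * U) * C" unfolding U(4) using U C by (intro assoc_mult_mat[symmetric]) auto
  then have "V * C' = C" using U C by simp
  then have "denominators C' i \<subseteq> denominators C i"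
    using denominators_mult_left_subset[OF U(2), of C' j i] U C by simp
  moreover have "denominators C i \<subseteq> denominators C' i"
    using denominators_mult_left_subset[OF U(1) C] U(4) by simp
  ultimately show ?thesis unfolding fractionality_eq_Max_denominators by simp
qed

section \<open>Fractionalities of triangular matrices\<close>

lemma upper_triangular_mult_vec_nth:
  fixes T :: "'a :: comm_ring_1 mat"
  assumes T: "T \<in> carrier_mat n n" "upper_triangular T" and "y \<in> carrier_vec n" and "i < n"
    and zero: "\<And>l. i < l \<Longrightarrow> l < n \<Longrightarrow> y $ l = 0"
  shows "(T *\<^sub>v y) $ i = T $$ (i, i) * y $ i"
proof -
  have "(T *\<^sub>v y) $ i = (\<Sum>l<n. T $$ (i, l) * y $ l)"
    using assms by (simp add: scalar_prod_def atLeast0LessThan)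
  also have "\<dots> = (\<Sum>l<n. if l = i then T $$ (i, i) * y $ i else 0)"
    using T \<open>i < n\<close> zero by (intro sum.cong) (auto simp: linorder_neq_iff upper_triangularD)
  finally show ?thesis using \<open>i < n\<close> by simp
qed

lemma upper_triangular_diag_nonzero:
  fixes T :: "'a :: idom mat"
  assumes "T \<in> carrier_mat n n" "upper_triangular T" "det T \<noteq> 0" and "i < n"
  shows "T $$ (i, i) \<noteq> 0"
  using assms det_upper_triangular[OF assms(2,1)] by (auto simp: prod_list_zero_iff diag_mat_def)

lemma upper_triangular_solution_zero:
  fixes T :: "'a :: idom mat"
  assumes T: "T \<in> carrier_mat n n" "upper_triangular T" "det T \<noteq> 0" and y: "y \<in> carrier_vec n"
    and Ty: "\<And>i. m < i \<Longrightarrow> i < n \<Longrightarrow> (T *\<^sub>v y) $ i = 0"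
  shows "m < k \<Longrightarrow> k < n \<Longrightarrow> y $ k = 0"
proof (induction "n - k" arbitrary: k rule: less_induct)
  case less
  have "T $$ (k, k) * y $ k = (T *\<^sub>v y) $ k"
    using less by (intro upper_triangular_mult_vec_nth[OF T(1,2) y, symmetric]) auto
  also have "\<dots> = 0" using Ty less.prems by simp
  finally show ?case using upper_triangular_diag_nonzero[OF T less.prems(2)] by simp
qed

lemma mult_mat_vec_take_cols_nth:
  fixes x :: "'a :: comm_ring_1 vec"
  assumes "T \<in> carrier_mat d n" "j \<le> n" "i < d" "x \<in> carrier_vec j"
  shows "(map_mat of_int (mat_of_cols d (take j (cols T))) *\<^sub>v x) $ i = (\<Sum>l<j. of_int (T $$ (i, l)) * x $ l)"
proof -
  have "(map_mat of_int (mat_of_cols d (take j (cols T))) *\<^sub>v x) $ i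
      = (\<Sum>l<length (take j (cols T)). of_int (take j (cols T) ! l $ i) * x $ l)"
    by (rule mult_mat_vec_mat_of_cols_nth) (use assms in simp_all)
  also have "\<dots> = (\<Sum>l<j. of_int (T $$ (i, l)) * x $ l)"
    using assms by (intro sum.cong) auto
  finally show ?thesis .
qed

lemma upper_triangular_solve_unit_vec:
  fixes T :: "'a :: field mat"
  assumes T: "T \<in> carrier_mat n n" "upper_triangular T" "det T \<noteq> 0" and m: "m < n"
  obtains y where "y \<in> carrier_vec n" "T *\<^sub>v y = unit_vec n m"
    "\<And>k. m < k \<Longrightarrow> k < n \<Longrightarrow> y $ k = 0" "T $$ (m, m) * y $ m = 1"
proof -
  obtain Ti where Ti: "Ti \<in> carrier_mat n n" "T * Ti = 1\<^sub>m n"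
    using field_mat_inverse[OF T(1,3)] by metis
  define y where "y = Ti *\<^sub>v unit_vec n m"
  have y: "y \<in> carrier_vec n" unfolding y_def using Ti by simp
  have Ty: "T *\<^sub>v y = unit_vec n m"
    unfolding y_def using Ti T by (subst assoc_mult_mat_vec[symmetric, of _ n n]) auto
  have y_zero: "y $ k = 0" if "m < k" "k < n" for k
    using upper_triangular_solution_zero[OF T y _ that] Ty by simp
  have "T $$ (m, m) * y $ m = 1"
    using upper_triangular_mult_vec_nth[OF T(1,2) y m] y_zero Ty m by simp
  then show thesis using that y Ty y_zero by blast
qed

lemma denominators_upper_triangular_le:
  assumes T: "T \<in> carrier_mat d d" "upper_triangular T" "det T \<noteq> 0" and m: "m < d"
    and "s \<in> denominators (mat_of_cols d (take (Suc m) (cols T))) m"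
  shows "s \<le> \<bar>T $$ (m, m)\<bar>"
proof -
  obtain x b where s: "s = den (x $ m)" and b: "b \<in> carrier_vec d" and x: "x \<in> carrier_vec (Suc m)"
    and eq: "map_mat rat_of_int (mat_of_cols d (take (Suc m) (cols T))) *\<^sub>v x = map_vec rat_of_int b"
    using assms(5) unfolding denominators_def using T m by auto
  have "of_int (b $ m) = (\<Sum>l<Suc m. of_int (T $$ (m, l)) * x $ l)"
    using mult_mat_vec_take_cols_nth[OF T(1) _ m x] eq b m by (metis index_map_vec(1) carrier_vecD Suc_leI)
  also have "\<dots> = of_int (T $$ (m, m)) * x $ m"
    using T m by (simp add: sum.neutral upper_triangularD)
  finally have "of_int \<bar>T $$ (m, m)\<bar> * x $ m = of_int (sgn (T $$ (m, m)) * b $ m)"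
    by (cases "T $$ (m, m) \<ge> 0") (auto simp: sgn_if)
  then show ?thesis
    unfolding s using upper_triangular_diag_nonzero[OF T m] by (intro den_le_of_mult_Ints) auto
qed

lemma upper_triangular_abs_diag_mem_denominators:
  assumes T: "T \<in> carrier_mat d d" "upper_triangular T" "det T \<noteq> 0" and m: "m < d"
  shows "\<bar>T $$ (m, m)\<bar> \<in> denominators (mat_of_cols d (take (Suc m) (cols T))) m"
proof -
  let ?C = "mat_of_cols d (take (Suc m) (cols T))"
  let ?h = "map_mat rat_of_int"
  have "?h T \<in> carrier_mat d d" "upper_triangular (?h T)" "det (?h T) \<noteq> 0"
    using T by (auto intro!: upper_triangularI simp: upper_triangularD)
  from upper_triangular_solve_unit_vec[OF this m]
  obtain y where y: "y \<in> carrier_vec d" and Ty: "?h T *\<^sub>v y = unit_vec d m"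
    and y_zero: "\<And>k. m < k \<Longrightarrow> k < d \<Longrightarrow> y $ k = 0" and ym: "of_int (T $$ (m, m)) * y $ m = 1"
    using T m by auto
  define x where "x = vec (Suc m) (\<lambda>l. y $ l)"
  have x: "x \<in> carrier_vec (Suc m)" unfolding x_def by simp
  have "?h ?C *\<^sub>v x = map_vec rat_of_int (unit_vec d m)"
  proof (rule eq_vecI)
    fix i assume "i < dim_vec (map_vec rat_of_int (unit_vec d m :: int vec))"
    then have i: "i < d" by simp
    have "(?h ?C *\<^sub>v x) $ i = (\<Sum>l<Suc m. of_int (T $$ (i, l)) * x $ l)"
      by (rule mult_mat_vec_take_cols_nth[OF T(1) _ i x]) (use m in simp)
    also have "\<dots> = (\<Sum>l<Suc m. of_int (T $$ (i, l)) * y $ l)"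
      unfolding x_def by (intro sum.cong) auto
    also have "\<dots> = (\<Sum>l<d. of_int (T $$ (i, l)) * y $ l)"
      using m y_zero by (intro sum.mono_neutral_left) auto
    also have "\<dots> = (?h T *\<^sub>v y) $ i" using T y i by (simp add: scalar_prod_def atLeast0LessThan)
    finally show "(?h ?C *\<^sub>v x) $ i = map_vec rat_of_int (unit_vec d m) $ i" using Ty i by (simp add: unit_vec_def)
  qed simp
  moreover have "\<bar>T $$ (m, m)\<bar> = den (x $ m)"
  proof -
    have "T $$ (m, m) \<noteq> 0" by (rule upper_triangular_diag_nonzero[OF T m])
    then have "y $ m = 1 / of_int (T $$ (m, m))" using ym by (simp add: field_simps)
    then show ?thesis using den_inverse_of_int[OF \<open>T $$ (m, m) \<noteq> 0\<close>] by (simp add: x_def)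
  qed
  moreover have "(unit_vec d m :: int vec) \<in> carrier_vec (dim_row ?C)" "x \<in> carrier_vec (dim_col ?C)"
    using x T m by simp_all
  ultimately show ?thesis
    unfolding denominators_def
    by (intro CollectI exI[of _ x] exI[of _ "unit_vec d m :: int vec"] conjI) assumption+
qed

lemma fractionality_upper_triangular:
  assumes T: "T \<in> carrier_mat d d" "upper_triangular T" "det T \<noteq> 0" and m: "m < d"
  shows "fractionality (mat_of_cols d (take (Suc m) (cols T))) m = \<bar>T $$ (m, m)\<bar>"
proof -
  let ?D = "denominators (mat_of_cols d (take (Suc m) (cols T))) m"
  note bound = denominators_upper_triangular_le[OF T m]
  have "?D \<subseteq> {0..\<bar>T $$ (m, m)\<bar>}"
  proof
    fix s assume s: "s \<in> ?D"
    then obtain x :: "rat vec" where "s = den (x $ m)" unfolding denominators_def by blast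
    then show "s \<in> {0..\<bar>T $$ (m, m)\<bar>}" using bound[OF s] den_pos[of "x $ m"] by simp
  qed
  then have "finite ?D" by (rule finite_subset) simp
  then show ?thesis unfolding fractionality_eq_Max_denominators
    using bound upper_triangular_abs_diag_mem_denominators[OF T m] by (rule Max_eqI)
qed

lemma abs_det_eq_prod_fractionality:
  assumes B: "B \<in> carrier_mat d d" and "det B \<noteq> 0"
  shows "\<bar>det B\<bar> = (\<Prod>j = 1..d. fractionality (mat_of_cols d (take j (cols B))) (j - 1))"
proof -
  obtain T where BT: "int_row_equiv d B T" and ut: "upper_triangular T"
    using int_row_equiv_upper_triangular[OF B] .
  have T: "T \<in> carrier_mat d d" by (rule int_row_equiv_carrier[OF B BT])
  have det_T: "\<bar>det T\<bar> = \<bar>det B\<bar>" by (rule abs_det_int_row_equiv[OF B BT])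
  then have "det T \<noteq> 0" using assms(2) by auto
  have "(\<Prod>j = 1..d. fractionality (mat_of_cols d (take j (cols B))) (j - 1))
      = (\<Prod>m<d. fractionality (mat_of_cols d (take (Suc m) (cols B))) m)"
    by (simp add: prod.atLeast1_atMost_eq)
  also have "\<dots> = (\<Prod>m<d. \<bar>T $$ (m, m)\<bar>)"
  proof (rule prod.cong[OF refl])
    fix m assume "m \<in> {..<d}"
    then have m: "m < d" by simp
    have "mat_of_cols d (take (Suc m) (cols B)) \<in> carrier_mat d (Suc m)"
      using mat_of_cols_carrier(1)[of d "take (Suc m) (cols B)"] B m by simp
    then show "fractionality (mat_of_cols d (take (Suc m) (cols B))) m = \<bar>T $$ (m, m)\<bar>"
      using fractionality_int_row_equiv int_row_equiv_take_cols[OF B BT, of "Suc m"] m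
        fractionality_upper_triangular[OF T ut \<open>det T \<noteq> 0\<close> m] by simp
  qed
  also have "\<dots> = \<bar>det T\<bar>"
    using det_upper_triangular[OF ut T] T by (simp add: prod_list_diag_prod atLeast0LessThan abs_prod)
  finally show ?thesis using det_T by simp
qed

lemma left_inverse_of_cols_permute_cols:
  assumes B: "B \<in> carrier_mat d d" and Bi: "Bi \<in> carrier_mat d d" "Bi * map_mat rat_of_int B = 1\<^sub>m d"
    and p: "p permutes {..<d}"
  shows "left_inverse_of_cols d (permute_list p (cols B)) (\<lambda>k i. Bi $$ (p k, i))"
proof (unfold left_inverse_of_cols_def, intro allI impI)
  fix k l assume "k < length (permute_list p (cols B))" "l < length (permute_list p (cols B))"
  then have "k < d" "l < d" using B by auto
  then have pk: "p k < d" and pl: "p l < d" using permutes_in_image[OF p] by auto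
  have "permute_list p (cols B) ! l $ i = B $$ (i, p l)" if "i < d" for i
    using B p \<open>l < d\<close> pl that by (simp add: permute_list_nth)
  then have "(\<Sum>i<d. Bi $$ (p k, i) * of_int (permute_list p (cols B) ! l $ i))
      = (\<Sum>i<d. Bi $$ (p k, i) * map_mat rat_of_int B $$ (i, p l))"
    using B pl by (intro sum.cong) auto
  also have "\<dots> = (Bi * map_mat rat_of_int B) $$ (p k, p l)"
    using B Bi(1) pk pl by (simp add: scalar_prod_def atLeast0LessThan)
  also have "\<dots> = (if p k = p l then 1 else 0)" unfolding Bi(2) using pk pl by simp
  also have "(p k = p l) = (k = l)" using permutes_inj[OF p] by (auto dest: injD)
  finally show "(\<Sum>i<d. Bi $$ (p k, i) * of_int (permute_list p (cols B) ! l $ i)) = (if k = l then 1 else 0)" .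
qed

lemma card_lattice_points_eq_prod_fractionality_permute:
  assumes B: "B \<in> carrier_mat d d" and "det B \<noteq> 0" and p: "p permutes {..<d}"
  shows "int (card (lattice_points_parallelepiped B)) =
    (\<Prod>j = 1..d. fractionality (mat_of_cols d (take j (permute_list p (cols B)))) (j - 1))"
proof -
  have "det (map_mat rat_of_int B) \<noteq> 0" using assms(2) by simp
  then obtain Bi where Bi: "Bi \<in> carrier_mat d d" "Bi * map_mat rat_of_int B = 1\<^sub>m d"
    using field_mat_inverse[of "map_mat rat_of_int B" d] B by auto
  have "lattice_points_parallelepiped B = lattice_points_parallelepiped (mat_of_cols d (permute_list p (cols B)))"
    using lattice_points_permute_cols[of p "cols B" d] mat_of_cols_cols[of B] B p by simp
  then show ?thesis
    using card_lattice_points_eq_prod_fractionality[OF left_inverse_of_cols_permute_cols[OF B Bi p]] B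
    by simp
qed

theorem mainTheorem4:
  fixes B :: "int mat" and d :: nat and p :: "nat \<Rightarrow> nat"
  assumes "B \<in> carrier_mat d d"
    and "det B \<noteq> 0"
    and "p permutes {..<d}"
  shows "\<bar>det B\<bar> = int (card (lattice_points_parallelepiped B))
       \<and> int (card (lattice_points_parallelepiped B)) =
         (\<Prod>j = 1..d. fractionality (mat_of_cols d (map (\<lambda>k. col B (p k)) [0..<j])) (j - 1))"
proof
  show "\<bar>det B\<bar> = int (card (lattice_points_parallelepiped B))"
    using abs_det_eq_prod_fractionality[OF assms(1,2)]
      card_lattice_points_eq_prod_fractionality_permute[OF assms(1,2) permutes_id] by simp
  have "take j (permute_list p (cols B)) = map (\<lambda>k. col B (p k)) [0..<j]" if "j \<le> d" for j
    using assms(1,3) that permutes_in_image[OF assms(3)] by (auto simp: permute_list_def take_map)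
  then show "int (card (lattice_points_parallelepiped B)) =
      (\<Prod>j = 1..d. fractionality (mat_of_cols d (map (\<lambda>k. col B (p k)) [0..<j])) (j - 1))"
    unfolding card_lattice_points_eq_prod_fractionality_permute[OF assms] by (intro prod.cong) auto
qed

end
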